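(* Let $p$ be a program of the nondeterministic guarded command language and $b,c\subseteq\Sigma$ predicates. Then $b\subseteq\mathsf{awp}(p)(c)$ (i.e. the triple $\{b\}\,p\,\{c\}$ is a valid Lisbon triple) if and only if, in the relational interpretation, $b\,p\,c\,\top = b\,\top$.
   Context: Program states are functions $\sigma:\mathsf{Vars}\to\mathbb{Z}$; $\Sigma$ is the set of all states, and a predicate is a subset of $\Sigma$. Programs are generated by $p ::= \texttt{skip} \mid x:=e \mid p;p \mid \{p\}\,\square\,\{p\} \mid \texttt{if}(g)\{p\}\texttt{else}\{p\} \mid \texttt{while}(g)\{p\}$, where $\square$ is nondeterministic choice. The collecting semantics $[\![p]\!]:\mathcal P(\Sigma)\to\mathcal P(\Sigma)$ is: $[\![\texttt{skip}]\!]S=S$; $[\![x:=e]\!]S=\{\sigma[x\mapsto\sigma(e)]\mid\sigma\in S\}$; $[\![p_1;p_2]\!]=[\![p_2]\!]\circ[\![p_1]\!]$; $[\![\texttt{if}(g)\{p_1\}\texttt{else}\{p_2\}]\!]S=[\![p_1]\!](S\cap g)\cup[\![p_2]\!](S\cap\overline g)$; $[\![\texttt{while}(g)\{p\}]\!]S=\overline g\cap\mathrm{lfp}\,X.\,(S\cup[\![p]\!](X\cap g))$; $[\![\{p_1\}\square\{p_2\}]\!]S=[\![p_1]\!]S\cup[\![p_2]\!]S$. Write $[\![p]\!](\sigma)=[\![p]\!]\{\sigma\}$. The angelic weakest precondition is $\mathsf{awp}(p)(c)=\{\sigma\mid [\![p]\!](\sigma)\cap c\neq\emptyset\}$. Relational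 interpretation (Kleene algebra with top and tests over the relations on $\Sigma$): the program $p$ denotes the relation $\{(\sigma,\tau)\mid\tau\in[\![p]\!](\sigma)\}\subseteq\Sigma\times\Sigma$; a predicate (test) $b$ denotes the partial identity $\{(\sigma,\sigma)\mid\sigma\in b\}$; juxtaposition denotes relational composition ($RS=\{(\sigma,\rho)\mid\exists\tau.\,(\sigma,\tau)\in R,(\tau,\rho)\in S\}$); $\top=\Sigma\times\Sigma$ is the universal relation. *)

theory Defs
  imports Main
begin

type_synonym 'v state = "'v \<Rightarrow> int"
type_synonym 'v pred = "'v state set"

datatype 'v prog =
    Skip
  | Assign 'v "'v state \<Rightarrow> int"
  | Seq "'v prog" "'v prog"
  | Choice "'v prog" "'v prog"
  | If "'v pred" "'v prog" "'v prog"
  | While "'v pred" "'v prog"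

primrec sem :: "'v prog \<Rightarrow> 'v pred \<Rightarrow> 'v pred" where
  "sem Skip S = S"
| "sem (Assign x e) S = {\<sigma>(x := e \<sigma>) | \<sigma>. \<sigma> \<in> S}"
| "sem (Seq p1 p2) S = sem p2 (sem p1 S)"
| "sem (Choice p1 p2) S = sem p1 S \<union> sem p2 S"
| "sem (If g p1 p2) S = sem p1 (S \<inter> g) \<union> sem p2 (S \<inter> - g)"
| "sem (While g p) S = - g \<inter> lfp (\<lambda>X. S \<union> sem p (X \<inter> g))"

definition awp :: "'v prog \<Rightarrow> 'v pred \<Rightarrow> 'v pred" where
  "awp p c = {\<sigma>. sem p {\<sigma>} \<inter> c \<noteq> {}}"

definition rel :: "'v prog \<Rightarrow> ('v state \<times> 'v state) set" where
  "rel p = {(\<sigma>, \<tau>). \<tau> \<in> sem p {\<sigma>}}"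

definition test :: "'v pred \<Rightarrow> ('v state \<times> 'v state) set" where
  "test b = Id_on b"

definition topR :: "('v state \<times> 'v state) set" where
  "topR = UNIV"

end

theory Submission
  imports Defs
begin

text \<open>The angelic precondition awp p c is the domain of the relation p c, and for any
relation S the identity b S \<top> = b \<top> says precisely that every state of b lies in the
domain of S: the left-hand side relates a state of b to everything iff it has an S-successor.\<close>

lemma Id_on_relcomp_UNIV_eq_iff_subset_Domain:
  fixes S :: "('a \<times> 'b) set"
  shows "Id_on b O S O (UNIV :: ('b \<times> 'c) set) = Id_on b O UNIV \<longleftrightarrow> b \<subseteq> Domain S"
proof
  assume eq: "Id_on b O S O (UNIV :: ('b \<times> 'c) set) = Id_on b O UNIV"
  show "b \<subseteq> Domain S"
  proof
    fix s assume "s \<in> b"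
    then have "(s, undefined :: 'c) \<in> Id_on b O S O UNIV"
      by (subst eq) auto
    then show "s \<in> Domain S" by auto
  qed
next
  assume "b \<subseteq> Domain S"
  then show "Id_on b O S O (UNIV :: ('b \<times> 'c) set) = Id_on b O UNIV"
    by fastforce
qed

lemma awp_eq_Domain_rel_test: "awp p c = Domain (rel p O test c)"
  unfolding awp_def rel_def test_def by auto

theorem mainTheorem7:
  fixes p :: "'v prog" and b c :: "'v pred"
  shows "b \<subseteq> awp p c \<longleftrightarrow> test b O rel p O test c O topR = test b O topR"
  unfolding awp_eq_Domain_rel_test test_def topR_def
  using Id_on_relcomp_UNIV_eq_iff_subset_Domain[of b "rel p O Id_on c", unfolded O_assoc]
  by (rule sym)

end
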